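(* Let $(K,\succ)$ be an ordered field and $\Gamma=(V,\rho,a_0,B)$ an infinite network over $K$. For $n\in\mathbb N$ let $V_n=\{x\in V:\operatorname{dist}(a_0,x)\le n\}$, $\partial V_n=\{x\in V:\operatorname{dist}(a_0,x)=n\}$, $B_n=B\cap V_n$, and let $\Gamma_n=(V_n,\rho|_{V_n},a_0,B_n\cup\partial V_n)$ be the finite network on the induced subgraph on $V_n$ with the restricted admittances. Then for every $n\in\mathbb N$, $$\mathcal P_{eff}(\Gamma_{n+1})\preceq \mathcal P_{eff}(\Gamma_n).$$
   Context: A network over an ordered field $(K,\succ)$ is $\Gamma=(V,\rho,a_0,B)$: $(V,E)$ a locally finite connected graph with $|V|\ge2$, $\rho:E\to K$ positive (admittance), $a_0\in V$, $B\subseteq V\setminus\{a_0\}$ nonempty; infinite if $|V|=\infty$. Set $\rho_{xy}=0$ if $xy$ is not an edge; $x\sim y$ means $xy$ is an edge; $\operatorname{dist}$ is the graph distance. For a finite network, the Dirichlet problem is: $v:V\to K$ with $\sum_y(v(y)-v(x))\rho_{xy}=0$ for $x\notin B\cup\{a_0\}$, $v=0$ on $B$, $v(a_0)=1$; it has a unique solution. The effective admittance of a finite network is $\mathcal P_{eff}(\Gamma)=\sum_{x\sim a_0}(1-v(x))\rho_{xa_0}$ with $v$ this solution. $\preceq$ denotes the order of $K$. *)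

theory Defs
  imports Main
begin

inductive walkn :: "('v \<Rightarrow> 'v \<Rightarrow> bool) \<Rightarrow> 'v \<Rightarrow> nat \<Rightarrow> 'v \<Rightarrow> bool"
  for E where
  walk0: "walkn E x 0 x"
| walkS: "walkn E x n y \<Longrightarrow> E y z \<Longrightarrow> walkn E x (Suc n) z"

definition gdist :: "('v \<Rightarrow> 'v \<Rightarrow> bool) \<Rightarrow> 'v \<Rightarrow> 'v \<Rightarrow> nat" where
  "gdist E x y = (LEAST n. walkn E x n y)"

definition network ::
  "'v set \<Rightarrow> ('v \<Rightarrow> 'v \<Rightarrow> bool) \<Rightarrow> ('v \<Rightarrow> 'v \<Rightarrow> 'a::linordered_field) \<Rightarrow> 'v \<Rightarrow> 'v set \<Rightarrow> bool" where
  "network V E rho a0 B \<longleftrightarrow>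
     (\<forall>x y. E x y \<longrightarrow> x \<in> V \<and> y \<in> V) \<and>
     (\<forall>x y. E x y \<longrightarrow> E y x) \<and>
     (\<forall>x. \<not> E x x) \<and>
     (\<forall>x\<in>V. finite {y. E x y}) \<and>
     (\<forall>x\<in>V. \<forall>y\<in>V. \<exists>n. walkn E x n y) \<and>
     (\<exists>x\<in>V. \<exists>y\<in>V. x \<noteq> y) \<and>
     (\<forall>x y. E x y \<longrightarrow> rho x y > 0) \<and>
     (\<forall>x y. \<not> E x y \<longrightarrow> rho x y = 0) \<and>
     (\<forall>x y. rho x y = rho y x) \<and>
     a0 \<in> V \<and> B \<subseteq> V - {a0} \<and> B \<noteq> {}"

(* v solves the Dirichlet problem of the finite network (V, rho, a0, B);
   v is normalised to 0 outside V so that the solution is unique as a HOL function *)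
definition dirichlet_sol ::
  "'v set \<Rightarrow> ('v \<Rightarrow> 'v \<Rightarrow> bool) \<Rightarrow> ('v \<Rightarrow> 'v \<Rightarrow> 'a::linordered_field) \<Rightarrow> 'v \<Rightarrow> 'v set \<Rightarrow> ('v \<Rightarrow> 'a) \<Rightarrow> bool" where
  "dirichlet_sol V E rho a0 B v \<longleftrightarrow>
     (\<forall>x\<in>V - (B \<union> {a0}). (\<Sum>y\<in>{y\<in>V. E x y}. (v y - v x) * rho x y) = 0) \<and>
     (\<forall>x\<in>B. v x = 0) \<and> v a0 = 1 \<and> (\<forall>x. x \<notin> V \<longrightarrow> v x = 0)"

definition P_eff ::
  "'v set \<Rightarrow> ('v \<Rightarrow> 'v \<Rightarrow> bool) \<Rightarrow> ('v \<Rightarrow> 'v \<Rightarrow> 'a::linordered_field) \<Rightarrow> 'v \<Rightarrow> 'v set \<Rightarrow> 'a" where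
  "P_eff V E rho a0 B =
     (let v = (THE v. dirichlet_sol V E rho a0 B v)
      in (\<Sum>x\<in>{x\<in>V. E x a0}. (1 - v x) * rho x a0))"

definition ballV :: "'v set \<Rightarrow> ('v \<Rightarrow> 'v \<Rightarrow> bool) \<Rightarrow> 'v \<Rightarrow> nat \<Rightarrow> 'v set" where
  "ballV V E a0 n = {x\<in>V. gdist E a0 x \<le> n}"

definition sphereV :: "'v set \<Rightarrow> ('v \<Rightarrow> 'v \<Rightarrow> bool) \<Rightarrow> 'v \<Rightarrow> nat \<Rightarrow> 'v set" where
  "sphereV V E a0 n = {x\<in>V. gdist E a0 x = n}"

definition restrE :: "'v set \<Rightarrow> ('v \<Rightarrow> 'v \<Rightarrow> bool) \<Rightarrow> 'v \<Rightarrow> 'v \<Rightarrow> bool" where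
  "restrE W E x y \<longleftrightarrow> E x y \<and> x \<in> W \<and> y \<in> W"

definition restrRho :: "'v set \<Rightarrow> ('v \<Rightarrow> 'v \<Rightarrow> 'a::zero) \<Rightarrow> 'v \<Rightarrow> 'v \<Rightarrow> 'a" where
  "restrRho W rho x y = (if x \<in> W \<and> y \<in> W then rho x y else 0)"

definition P_eff_trunc ::
  "'v set \<Rightarrow> ('v \<Rightarrow> 'v \<Rightarrow> bool) \<Rightarrow> ('v \<Rightarrow> 'v \<Rightarrow> 'a::linordered_field) \<Rightarrow> 'v \<Rightarrow> 'v set \<Rightarrow> nat \<Rightarrow> 'a" where
  "P_eff_trunc V E rho a0 B n =
     P_eff (ballV V E a0 n) (restrE (ballV V E a0 n) E) (restrRho (ballV V E a0 n) rho) a0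
           ((B \<inter> ballV V E a0 n) \<union> sphereV V E a0 n)"

end

theory Submission
  imports Defs
begin

(* By Dirichlet's principle, the effective admittance of a finite network is half the minimum of
   the energy sum_{x,y} rho_xy (g y - g x)^2 over all potentials g with g a0 = 1 that vanish on
   the boundary, and the minimum is attained by the solution of the Dirichlet problem. The
   solution w for Gamma_n, extended by zero, is admissible for Gamma_(n+1): it vanishes on the
   sphere of radius n, so the edges leaving V_n contribute nothing and w has the same energy in
   both networks. Hence P_eff(Gamma_(n+1)) <= energy(w)/2 = P_eff(Gamma_n). Over an arbitrary
   ordered field the solution is constructed by eliminating the interior vertices one at a time
   (Kron reduction); its uniqueness follows from the same energy identity. *)

definition laplacian :: "'v set \<Rightarrow> ('v \<Rightarrow> 'v \<Rightarrow> 'a::comm_ring) \<Rightarrow> ('v \<Rightarrow> 'a) \<Rightarrow> 'v \<Rightarrow> 'a" where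
  "laplacian W c f x = (\<Sum>y\<in>W. c x y * (f y - f x))"

definition energy :: "'v set \<Rightarrow> ('v \<Rightarrow> 'v \<Rightarrow> 'a::comm_ring) \<Rightarrow> ('v \<Rightarrow> 'a) \<Rightarrow> ('v \<Rightarrow> 'a) \<Rightarrow> 'a" where
  "energy W c f g = (\<Sum>x\<in>W. \<Sum>y\<in>W. c x y * (f y - f x) * (g y - g x))"

lemma energy_commute: "energy W c f g = energy W c g f"
  unfolding energy_def by (simp add: algebra_simps)

lemma energy_diff_self:
  fixes c :: "'v \<Rightarrow> 'v \<Rightarrow> 'a::comm_ring_1"
  shows "energy W c (\<lambda>x. f x - g x) (\<lambda>x. f x - g x) = energy W c f f - 2 * energy W c f g + energy W c g g"
proof -
  have "c x y * ((f y - g y) - (f x - g x)) * ((f y - g y) - (f x - g x)) =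
      c x y * (f y - f x) * (f y - f x) - 2 * (c x y * (f y - f x) * (g y - g x))
      + c x y * (g y - g x) * (g y - g x)" for x y
    by (simp add: algebra_simps)
  then show ?thesis
    unfolding energy_def by (simp add: sum.distrib sum_subtractf sum_distrib_left)
qed

lemma energy_self_nonneg:
  fixes c :: "'v \<Rightarrow> 'v \<Rightarrow> 'a::linordered_idom"
  assumes "\<forall>x y. 0 \<le> c x y"
  shows "0 \<le> energy W c f f"
  unfolding energy_def using assms by (intro sum_nonneg) (simp add: mult.assoc)

lemma energy_eq_laplacian:
  fixes c :: "'v \<Rightarrow> 'v \<Rightarrow> 'a::comm_ring_1"
  assumes "\<forall>x y. c x y = c y x"
  shows "energy W c f g = - 2 * (\<Sum>x\<in>W. g x * laplacian W c f x)"
proof -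
  let ?S = "\<lambda>h. \<Sum>x\<in>W. \<Sum>y\<in>W. c x y * (f y - f x) * h x y"
  have "energy W c f g = ?S (\<lambda>x y. g y) - ?S (\<lambda>x y. g x)"
    unfolding energy_def by (simp add: right_diff_distrib sum_subtractf)
  also have "?S (\<lambda>x y. g y) = (\<Sum>y\<in>W. \<Sum>x\<in>W. c x y * (f y - f x) * g y)"
    by (rule sum.swap)
  also have "\<dots> = - ?S (\<lambda>x y. g x)"
    using assms by (simp add: sum_negf[symmetric] algebra_simps)
  also have "?S (\<lambda>x y. g x) = (\<Sum>x\<in>W. g x * laplacian W c f x)"
    by (simp add: laplacian_def sum_distrib_left mult.commute mult.left_commute)
  finally show ?thesis by simp
qed

lemma energy_harmonic:
  fixes c :: "'v \<Rightarrow> 'v \<Rightarrow> 'a::comm_ring_1"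
  assumes "finite W" "a \<in> W" "\<forall>x y. c x y = c y x"
    and "\<forall>x\<in>W - (Bd \<union> {a}). laplacian W c f x = 0" and "\<forall>x\<in>Bd. g x = 0"
  shows "energy W c f g = - 2 * (g a * laplacian W c f a)"
proof -
  have "(\<Sum>x\<in>W - {a}. g x * laplacian W c f x) = 0"
    using assms(4,5) by (intro sum.neutral) (metis DiffE DiffI Un_iff mult_zero_left mult_zero_right)
  then have "(\<Sum>x\<in>W. g x * laplacian W c f x) = g a * laplacian W c f a"
    using assms(1,2) by (simp add: sum.remove)
  then show ?thesis
    using energy_eq_laplacian[OF assms(3)] by simp
qed

lemma dirichlet_principle:
  fixes c :: "'v \<Rightarrow> 'v \<Rightarrow> 'a::linordered_idom"
  assumes "finite W" "a \<in> W" "\<forall>x y. c x y = c y x" "\<forall>x y. 0 \<le> c x y"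
    and v_harmonic: "\<forall>x\<in>W - (Bd \<union> {a}). laplacian W c v x = 0"
    and "\<forall>x\<in>Bd. v x = 0" "v a = 1" "\<forall>x\<in>Bd. g x = 0" "g a = 1"
  shows "energy W c v v \<le> energy W c g g"
proof -
  have "energy W c v g = energy W c v v"
    using energy_harmonic[OF assms(1-3) v_harmonic] assms(6-9) by metis
  moreover have "0 \<le> energy W c (\<lambda>x. g x - v x) (\<lambda>x. g x - v x)"
    using assms(4) by (rule energy_self_nonneg)
  ultimately show ?thesis
    unfolding energy_diff_self energy_commute[of W c g v] by simp
qed

lemma energy_eq_0_imp_edge_const:
  fixes c :: "'v \<Rightarrow> 'v \<Rightarrow> 'a::linordered_idom"
  assumes "finite W" "\<forall>x y. 0 \<le> c x y" "energy W c d d = 0"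
    and "x \<in> W" "y \<in> W" "c x y \<noteq> 0"
  shows "d x = d y"
proof -
  let ?t = "\<lambda>x y. c x y * (d y - d x) * (d y - d x)"
  have t_nonneg: "0 \<le> ?t x y" for x y
    using assms(2) by (simp add: mult.assoc)
  have "(\<Sum>y\<in>W. ?t x y) = 0"
    using assms(3,4) sum_nonneg_eq_0_iff[OF assms(1), of "\<lambda>x. \<Sum>y\<in>W. ?t x y"] t_nonneg
    unfolding energy_def by (simp add: sum_nonneg)
  then have "?t x y = 0"
    using assms(5) sum_nonneg_eq_0_iff[OF assms(1), of "?t x"] t_nonneg by simp
  then show ?thesis
    using assms(6) by simp
qed

lemma energy_restrRho: "energy W (restrRho W c) f g = energy W c f g"
  unfolding energy_def restrRho_def by (intro sum.cong) auto

lemma energy_vanishing_outside: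
  assumes "finite W'" "W \<subseteq> W'" "\<forall>x\<in>W' - W. f x = 0"
    and "\<forall>x\<in>W. \<forall>y\<in>W' - W. c x y = 0 \<and> c y x = 0 \<or> f x = 0"
  shows "energy W' c f f = energy W c f f"
proof -
  let ?t = "\<lambda>x y. c x y * (f y - f x) * (f y - f x)"
  have t_0: "?t x y = 0" if "x \<in> W'" "y \<in> W'" "x \<notin> W \<or> y \<notin> W" for x y
    using that assms(3,4) by (metis Diff_iff diff_self mult_zero_left mult_zero_right)
  have "energy W' c f f = (\<Sum>x\<in>W'. \<Sum>y\<in>W. ?t x y)"
    unfolding energy_def using assms(1,2) t_0
    by (intro sum.cong refl sum.mono_neutral_right) auto
  also have "\<dots> = energy W c f f"
    unfolding energy_def using assms(1,2) t_0
    by (intro sum.mono_neutral_right) (auto intro!: sum.neutral)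
  finally show ?thesis .
qed

(* Kron reduction (star-mesh transform): eliminating z yields conductances on W - {z} for which
   every potential u, extended to z by the weighted mean of its neighbours, keeps its Laplacian at
   all other vertices. If the total conductance at z is 0, the divisions by 0 are harmless since
   then every c z y vanishes. *)

definition harmonic_value :: "'v set \<Rightarrow> ('v \<Rightarrow> 'v \<Rightarrow> 'a::field) \<Rightarrow> 'v \<Rightarrow> ('v \<Rightarrow> 'a) \<Rightarrow> 'a" where
  "harmonic_value W c z u = (\<Sum>y\<in>W - {z}. c z y * u y) / (\<Sum>y\<in>W - {z}. c z y)"

definition kron_reduce :: "'v set \<Rightarrow> ('v \<Rightarrow> 'v \<Rightarrow> 'a::field) \<Rightarrow> 'v \<Rightarrow> 'v \<Rightarrow> 'v \<Rightarrow> 'a" where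
  "kron_reduce W c z x y = c x y + c x z * c z y / (\<Sum>w\<in>W - {z}. c z w)"

lemma laplacian_remove:
  assumes "finite W" "z \<in> W"
  shows "laplacian W c f x = laplacian (W - {z}) c f x + c x z * (f z - f x)"
  unfolding laplacian_def using assms by (simp add: sum.remove add.commute)

lemma degree_eq_0_imp_conductance_eq_0:
  fixes c :: "'v \<Rightarrow> 'v \<Rightarrow> 'a::linordered_field"
  assumes "finite W" "\<forall>x y. 0 \<le> c x y" "(\<Sum>y\<in>W - {z}. c z y) = 0" "y \<in> W - {z}"
  shows "c z y = 0"
  using assms sum_nonneg_eq_0_iff[of "W - {z}" "c z"] by blast

lemma laplacian_update_outside:
  "x \<in> W - {z} \<Longrightarrow> laplacian (W - {z}) c (u(z := h)) x = laplacian (W - {z}) c u x"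
  unfolding laplacian_def by (intro sum.cong) auto

lemma laplacian_harmonic_value:
  fixes c :: "'v \<Rightarrow> 'v \<Rightarrow> 'a::linordered_field"
  assumes "finite W" "z \<in> W" "\<forall>x y. 0 \<le> c x y"
  shows "laplacian W c (u(z := harmonic_value W c z u)) z = 0"
proof -
  let ?s = "\<Sum>y\<in>W - {z}. c z y" and ?h = "harmonic_value W c z u"
  have "laplacian W c (u(z := ?h)) z = (\<Sum>y\<in>W - {z}. c z y * (u y - ?h))"
    unfolding laplacian_remove[OF assms(1,2)] by (auto simp: laplacian_def intro!: sum.cong)
  also have "\<dots> = (\<Sum>y\<in>W - {z}. c z y * u y) - ?s * ?h"
    by (simp add: right_diff_distrib sum_subtractf sum_distrib_right)
  also have "\<dots> = 0"
  proof (cases "?s = 0")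
    case True
    then show ?thesis
      using degree_eq_0_imp_conductance_eq_0[OF assms(1,3) True] by simp
  next
    case False
    then show ?thesis by (simp add: harmonic_value_def)
  qed
  finally show ?thesis .
qed

lemma laplacian_kron_reduce:
  fixes c :: "'v \<Rightarrow> 'v \<Rightarrow> 'a::linordered_field"
  assumes "finite W" "z \<in> W" "\<forall>x y. 0 \<le> c x y" "\<forall>x y. c x y = c y x" "x \<in> W - {z}"
  shows "laplacian W c (u(z := harmonic_value W c z u)) x = laplacian (W - {z}) (kron_reduce W c z) u x"
proof -
  let ?s = "\<Sum>y\<in>W - {z}. c z y" and ?h = "harmonic_value W c z u"
  have "c x z * (?h - u x) = (\<Sum>y\<in>W - {z}. c x z * c z y / ?s * (u y - u x))"
  proof (cases "?s = 0")
    case True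
    then show ?thesis
      using degree_eq_0_imp_conductance_eq_0[OF assms(1,3) True assms(5)] assms(4) by simp
  next
    case False
    have "(\<Sum>y\<in>W - {z}. c z y * (u y - u x)) = (\<Sum>y\<in>W - {z}. c z y * u y) - ?s * u x"
      by (simp add: right_diff_distrib sum_subtractf sum_distrib_right)
    then have "?h - u x = (\<Sum>y\<in>W - {z}. c z y * (u y - u x)) / ?s"
      using False by (simp add: harmonic_value_def field_simps)
    then show ?thesis
      by (simp add: sum_distrib_left sum_divide_distrib mult.assoc)
  qed
  then have "laplacian W c (u(z := ?h)) x
      = laplacian (W - {z}) c u x + (\<Sum>y\<in>W - {z}. c x z * c z y / ?s * (u y - u x))"
    using assms(5) by (simp add: laplacian_remove[OF assms(1,2)] laplacian_update_outside)
  also have "\<dots> = laplacian (W - {z}) (kron_reduce W c z) u x"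
    by (simp add: laplacian_def kron_reduce_def sum.distrib[symmetric] distrib_right)
  finally show ?thesis .
qed

lemma harmonic_extension_exists:
  fixes c :: "'v \<Rightarrow> 'v \<Rightarrow> 'a::linordered_field"
  assumes "finite W" "I \<subseteq> W" "\<forall>x y. 0 \<le> c x y" "\<forall>x y. c x y = c y x"
  shows "\<exists>u. (\<forall>x\<in>I. laplacian W c u x = 0) \<and> (\<forall>x\<in>W - I. u x = f x)"
proof -
  have "finite I"
    using assms(1,2) by (rule finite_subset[rotated])
  then show ?thesis
    using assms
  proof (induction I arbitrary: W c rule: finite_induct)
    case empty
    then show ?case by auto
  next
    case (insert z I)
    let ?c' = "kron_reduce W c z"
    have "0 \<le> (\<Sum>y\<in>W - {z}. c z y)"
      using insert.prems(3) by (simp add: sum_nonneg)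
    then have "\<forall>x y. 0 \<le> ?c' x y" "\<forall>x y. ?c' x y = ?c' y x"
      using insert.prems(3,4) by (simp_all add: kron_reduce_def mult.commute)
    moreover have "finite (W - {z})" "I \<subseteq> W - {z}"
      using insert.prems(1,2) insert.hyps(2) by auto
    ultimately obtain u where u_harmonic: "\<forall>x\<in>I. laplacian (W - {z}) ?c' u x = 0"
      and u_boundary: "\<forall>x\<in>W - {z} - I. u x = f x"
      using insert.IH by blast
    show ?case
    proof (intro exI conjI ballI)
      fix x
      assume "x \<in> insert z I"
      then show "laplacian W c (u(z := harmonic_value W c z u)) x = 0"
      proof
        assume "x = z"
        then show ?thesis
          using laplacian_harmonic_value[OF insert.prems(1) _ insert.prems(3)] insert.prems(2) by simp
      next
        assume "x \<in> I"
        then have "x \<in> W - {z}"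
          using insert.prems(2) insert.hyps(2) by auto
        then show ?thesis
          using laplacian_kron_reduce[OF insert.prems(1) _ insert.prems(3,4)] insert.prems(2)
            u_harmonic \<open>x \<in> I\<close> by simp
      qed
    next
      fix x
      assume "x \<in> W - insert z I"
      then show "(u(z := harmonic_value W c z u)) x = f x"
        using u_boundary by auto
    qed
  qed
qed

lemma walkn_mono:
  assumes "walkn E a m b" "\<And>x y. E x y \<Longrightarrow> E' x y"
  shows "walkn E' a m b"
  using assms(1) by induction (auto intro: walkn.intros assms(2))

lemma walkn_edge_invariant:
  assumes "walkn E a m b" "\<And>x y. E x y \<Longrightarrow> d x = d y"
  shows "d b = d a"
  using assms(1) by induction (simp_all add: assms(2)[symmetric])

lemma walkn_0_iff: "walkn E a 0 x \<longleftrightarrow> x = a"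
  by (auto elim: walkn.cases intro: walkn.walk0)

lemma walkn_SucE:
  assumes "walkn E a (Suc m) y"
  obtains x where "walkn E a m x" "E x y"
  using assms by (cases rule: walkn.cases) auto

lemma gdist_le: "walkn E a m x \<Longrightarrow> gdist E a x \<le> m"
  unfolding gdist_def by (rule Least_le)

lemma walkn_gdist: "walkn E a m x \<Longrightarrow> walkn E a (gdist E a x) x"
  unfolding gdist_def by (rule LeastI)

lemma gdist_self [simp]: "gdist E a a = 0"
  using gdist_le[OF walkn.walk0[of E a]] by simp

lemma gdist_edge: "walkn E a m x \<Longrightarrow> E x y \<Longrightarrow> gdist E a y \<le> Suc (gdist E a x)"
  by (rule gdist_le) (rule walkn.walkS[OF walkn_gdist])

lemma ballV_mono: "k \<le> m \<Longrightarrow> ballV V E a k \<subseteq> ballV V E a m"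
  by (auto simp: ballV_def)

lemma trunc_boundary_succ_subset:
  "B \<inter> ballV V E a (k + 1) \<union> sphereV V E a (k + 1) \<subseteq>
     B \<inter> ballV V E a k \<union> sphereV V E a k \<union> - ballV V E a k"
  by (auto simp: ballV_def sphereV_def)

lemma walkn_in_ballV:
  assumes "\<forall>x y. E x y \<longrightarrow> x \<in> V \<and> y \<in> V" "walkn E a m y"
  shows "walkn (restrE (ballV V E a m) E) a m y"
  using assms(2)
proof induction
  case (walk0 a)
  show ?case by (rule walkn.walk0)
next
  case (walkS a m y z)
  have "walkn (restrE (ballV V E a (Suc m)) E) a m y"
    using walkS.IH by (rule walkn_mono) (auto simp: restrE_def ballV_def)
  moreover have "restrE (ballV V E a (Suc m)) E y z"
    using walkS.hyps assms(1) gdist_le[OF walkS.hyps(1)] gdist_le[OF walkn.walkS[OF walkS.hyps]]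
    by (auto simp: restrE_def ballV_def)
  ultimately show ?case by (rule walkn.walkS)
qed

locale finite_network =
  fixes W :: "'v set" and E :: "'v \<Rightarrow> 'v \<Rightarrow> bool"
    and c :: "'v \<Rightarrow> 'v \<Rightarrow> 'a::linordered_field" and a0 :: 'v
  assumes finite_W: "finite W"
    and a0_in_W: "a0 \<in> W"
    and c_sym: "\<forall>x y. c x y = c y x"
    and c_nonneg: "\<forall>x y. 0 \<le> c x y"
    and edge: "E x y \<Longrightarrow> x \<in> W \<and> y \<in> W \<and> 0 < c x y"
    and non_edge: "x \<in> W \<Longrightarrow> y \<in> W \<Longrightarrow> \<not> E x y \<Longrightarrow> c x y = 0"
    and reachable: "x \<in> W \<Longrightarrow> \<exists>m. walkn E a0 m x"
begin

lemma sum_edges_eq_sum: "x \<in> W \<Longrightarrow> (\<Sum>y\<in>{y\<in>W. E x y}. h y * c x y) = (\<Sum>y\<in>W. h y * c x y)"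
  using finite_W non_edge by (intro sum.mono_neutral_left) auto

lemma dirichlet_sol_iff:
  "dirichlet_sol W E c a0 Bd v \<longleftrightarrow>
     (\<forall>x\<in>W - (Bd \<union> {a0}). laplacian W c v x = 0) \<and> (\<forall>x\<in>Bd. v x = 0) \<and> v a0 = 1 \<and>
     (\<forall>x. x \<notin> W \<longrightarrow> v x = 0)"
proof -
  have "(\<Sum>y\<in>{y\<in>W. E x y}. (v y - v x) * c x y) = laplacian W c v x" if "x \<in> W" for x
    unfolding laplacian_def sum_edges_eq_sum[OF that] by (simp add: mult.commute)
  then have "(\<forall>x\<in>W - (Bd \<union> {a0}). (\<Sum>y\<in>{y\<in>W. E x y}. (v y - v x) * c x y) = 0) \<longleftrightarrow>
      (\<forall>x\<in>W - (Bd \<union> {a0}). laplacian W c v x = 0)"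
    by auto
  then show ?thesis
    unfolding dirichlet_sol_def by (simp only:)
qed

lemma dirichlet_sol_exists:
  assumes "a0 \<notin> Bd"
  shows "\<exists>v. dirichlet_sol W E c a0 Bd v"
proof -
  obtain u where u_harmonic: "\<forall>x\<in>W - (Bd \<union> {a0}). laplacian W c u x = 0"
    and u_boundary: "\<forall>x\<in>W - (W - (Bd \<union> {a0})). u x = (if x = a0 then 1 else 0)"
    using harmonic_extension_exists[OF finite_W Diff_subset c_nonneg c_sym,
        where f = "\<lambda>x. if x = a0 then 1 else 0"] by blast
  define v where "v x = (if x \<in> W then u x else 0)" for x
  have "laplacian W c v x = laplacian W c u x" if "x \<in> W" for x
    unfolding laplacian_def v_def using that by (intro sum.cong) auto
  moreover have "\<forall>x\<in>Bd. v x = 0" "v a0 = 1" "\<forall>x. x \<notin> W \<longrightarrow> v x = 0"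
    using u_boundary a0_in_W assms by (auto simp: v_def)
  ultimately have "dirichlet_sol W E c a0 Bd v"
    using u_harmonic by (simp add: dirichlet_sol_iff)
  then show ?thesis by blast
qed

lemma harmonic_vanishing:
  assumes "\<forall>x\<in>W - (Bd \<union> {a0}). laplacian W c d x = 0" "\<forall>x\<in>Bd. d x = 0" "d a0 = 0"
    and "x \<in> W"
  shows "d x = 0"
proof -
  have energy_0: "energy W c d d = 0"
    using energy_harmonic[OF finite_W a0_in_W c_sym assms(1,2)] assms(3) by simp
  have edge_const: "d y = d z" if "E y z" for y z
  proof -
    have "y \<in> W" "z \<in> W" "c y z \<noteq> 0"
      using edge[OF that] by auto
    then show ?thesis
      by (rule energy_eq_0_imp_edge_const[OF finite_W c_nonneg energy_0])
  qed
  obtain m where "walkn E a0 m x"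
    using reachable[OF assms(4)] by blast
  then have "d x = d a0"
    using edge_const by (rule walkn_edge_invariant)
  with assms(3) show ?thesis by simp
qed

lemma dirichlet_sol_unique:
  assumes "dirichlet_sol W E c a0 Bd v" "dirichlet_sol W E c a0 Bd v'"
  shows "v' = v"
proof
  fix x
  let ?d = "\<lambda>x. v' x - v x"
  have "laplacian W c ?d y = laplacian W c v' y - laplacian W c v y" for y
    unfolding laplacian_def by (simp add: sum_subtractf[symmetric] algebra_simps)
  then have "\<forall>y\<in>W - (Bd \<union> {a0}). laplacian W c ?d y = 0" "\<forall>y\<in>Bd. ?d y = 0" "?d a0 = 0"
    using assms unfolding dirichlet_sol_iff by simp_all
  then have "x \<in> W \<Longrightarrow> ?d x = 0"
    by (rule harmonic_vanishing)
  then show "v' x = v x"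
    using assms unfolding dirichlet_sol_iff by (cases "x \<in> W") simp_all
qed

lemma P_eff_eq_energy:
  assumes "dirichlet_sol W E c a0 Bd v"
  shows "P_eff W E c a0 Bd = energy W c v v / 2"
proof -
  have v_harmonic: "\<forall>x\<in>W - (Bd \<union> {a0}). laplacian W c v x = 0"
    and v_boundary: "\<forall>x\<in>Bd. v x = 0" and v_a0: "v a0 = 1"
    using assms by (simp_all add: dirichlet_sol_iff)
  have "(THE v. dirichlet_sol W E c a0 Bd v) = v"
    using assms dirichlet_sol_unique by blast
  moreover have "(\<Sum>x\<in>{x\<in>W. E x a0}. (1 - v x) * c x a0) = (\<Sum>x\<in>W. (1 - v x) * c x a0)"
    using finite_W non_edge a0_in_W by (intro sum.mono_neutral_left) auto
  ultimately have "P_eff W E c a0 Bd = (\<Sum>x\<in>W. (1 - v x) * c x a0)"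
    unfolding P_eff_def by simp
  also have "\<dots> = - laplacian W c v a0"
    using v_a0 c_sym by (simp add: laplacian_def sum_negf[symmetric] algebra_simps)
  also have "\<dots> = energy W c v v / 2"
    using energy_harmonic[OF finite_W a0_in_W c_sym v_harmonic v_boundary] v_a0 by simp
  finally show ?thesis .
qed

lemma P_eff_le_energy:
  assumes "a0 \<notin> Bd" "\<forall>x\<in>Bd. g x = 0" "g a0 = 1"
  shows "P_eff W E c a0 Bd \<le> energy W c g g / 2"
proof -
  obtain v where v: "dirichlet_sol W E c a0 Bd v"
    using dirichlet_sol_exists[OF assms(1)] by blast
  then have "\<forall>x\<in>W - (Bd \<union> {a0}). laplacian W c v x = 0" "\<forall>x\<in>Bd. v x = 0" "v a0 = 1"
    by (simp_all add: dirichlet_sol_iff)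
  then have "energy W c v v \<le> energy W c g g"
    using dirichlet_principle[OF finite_W a0_in_W c_sym c_nonneg] assms(2,3) by blast
  then show ?thesis
    using P_eff_eq_energy[OF v] by simp
qed

end

context
  fixes V E rho a0 B
  assumes N: "network V E rho a0 B"
begin

lemma network_edge_in_V: "E x y \<Longrightarrow> x \<in> V \<and> y \<in> V"
  using N by (simp add: network_def)

lemma network_walkn_gdist:
  assumes "x \<in> V"
  shows "walkn E a0 (gdist E a0 x) x"
proof -
  have "\<exists>m. walkn E a0 m x"
    using N assms by (simp add: network_def)
  then show ?thesis
    by (metis walkn_gdist)
qed

lemma finite_ballV: "finite (ballV V E a0 k)"
proof (induction k)
  case 0
  have "ballV V E a0 0 \<subseteq> {a0}"
    using network_walkn_gdist by (fastforce simp: ballV_def walkn_0_iff)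
  then show ?case
    by (rule finite_subset) simp
next
  case (Suc k)
  have "ballV V E a0 (Suc k) \<subseteq> ballV V E a0 k \<union> (\<Union>x\<in>ballV V E a0 k. {y. E x y})"
  proof
    fix y
    assume y: "y \<in> ballV V E a0 (Suc k)"
    show "y \<in> ballV V E a0 k \<union> (\<Union>x\<in>ballV V E a0 k. {y. E x y})"
    proof (cases "gdist E a0 y \<le> k")
      case False
      with y have "walkn E a0 (Suc k) y"
        using network_walkn_gdist[of y] by (simp add: ballV_def le_Suc_eq)
      then obtain x where "walkn E a0 k x" "E x y"
        by (rule walkn_SucE)
      then have "x \<in> ballV V E a0 k"
        using gdist_le network_edge_in_V by (auto simp: ballV_def)
      with \<open>E x y\<close> show ?thesis by blast
    qed (use y in \<open>simp add: ballV_def\<close>)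
  qed
  moreover have "finite {y. E x y}" if "x \<in> ballV V E a0 k" for x
    using N that by (simp add: network_def ballV_def)
  ultimately show ?case
    using Suc.IH by (simp add: finite_subset)
qed

lemma edge_leaving_ballV:
  assumes "x \<in> ballV V E a0 k" "y \<notin> ballV V E a0 k" "E x y"
  shows "x \<in> sphereV V E a0 k"
  using assms gdist_edge[OF network_walkn_gdist assms(3)] network_edge_in_V[OF assms(3)]
  by (auto simp: ballV_def sphereV_def)

lemma finite_network_ballV:
  "finite_network (ballV V E a0 k) (restrE (ballV V E a0 k) E) (restrRho (ballV V E a0 k) rho) a0"
proof
  let ?W = "ballV V E a0 k"
  have rho: "\<forall>x y. E x y \<longrightarrow> rho x y > 0" "\<forall>x y. \<not> E x y \<longrightarrow> rho x y = 0" "\<forall>x y. rho x y = rho y x"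
    and "a0 \<in> V"
    using N by (simp_all add: network_def)
  show "finite ?W"
    by (rule finite_ballV)
  show "a0 \<in> ?W"
    using \<open>a0 \<in> V\<close> by (simp add: ballV_def)
  show "\<forall>x y. restrRho ?W rho x y = restrRho ?W rho y x"
    using rho by (simp add: restrRho_def)
  show "\<forall>x y. 0 \<le> restrRho ?W rho x y"
    using rho by (metis restrRho_def order.refl less_imp_le)
  show "restrE ?W E x y \<Longrightarrow> x \<in> ?W \<and> y \<in> ?W \<and> 0 < restrRho ?W rho x y" for x y
    using rho by (simp add: restrE_def restrRho_def)
  show "x \<in> ?W \<Longrightarrow> y \<in> ?W \<Longrightarrow> \<not> restrE ?W E x y \<Longrightarrow> restrRho ?W rho x y = 0" for x y
    using rho by (simp add: restrE_def restrRho_def)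
  show "\<exists>m. walkn (restrE ?W E) a0 m x" if "x \<in> ?W" for x
  proof
    have "walkn (restrE (ballV V E a0 (gdist E a0 x)) E) a0 (gdist E a0 x) x"
      using network_edge_in_V network_walkn_gdist that
      by (intro walkn_in_ballV) (auto simp: ballV_def)
    then show "walkn (restrE ?W E) a0 (gdist E a0 x) x"
      by (rule walkn_mono) (use that in \<open>auto simp: restrE_def ballV_def\<close>)
  qed
qed

lemma a0_notin_trunc_boundary:
  "k \<ge> 1 \<Longrightarrow> a0 \<notin> B \<inter> ballV V E a0 k \<union> sphereV V E a0 k"
  using N by (auto simp: network_def sphereV_def)

lemma energy_ballV_vanishing_on_sphere:
  assumes "k \<le> m" "\<forall>x\<in>sphereV V E a0 k. f x = 0" "\<forall>x. x \<notin> ballV V E a0 k \<longrightarrow> f x = 0"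
  shows "energy (ballV V E a0 m) rho f f = energy (ballV V E a0 k) rho f f"
proof (rule energy_vanishing_outside[OF finite_ballV ballV_mono[OF assms(1)]])
  show "\<forall>x\<in>ballV V E a0 m - ballV V E a0 k. f x = 0"
    using assms(3) by blast
  have "rho x y = 0 \<and> rho y x = 0 \<or> f x = 0" if "x \<in> ballV V E a0 k" "y \<notin> ballV V E a0 k" for x y
  proof (cases "E x y")
    case True
    then show ?thesis
      using edge_leaving_ballV[OF that] assms(2) by blast
  next
    case False
    then show ?thesis
      using N by (simp add: network_def)
  qed
  then show "\<forall>x\<in>ballV V E a0 k. \<forall>y\<in>ballV V E a0 m - ballV V E a0 k. rho x y = 0 \<and> rho y x = 0 \<or> f x = 0"
    by blast
qed

end

theorem mainTheorem7:
  fixes V :: "'v set" and E :: "'v \<Rightarrow> 'v \<Rightarrow> bool"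
    and rho :: "'v \<Rightarrow> 'v \<Rightarrow> 'a::linordered_field" and a0 :: 'v and B :: "'v set"
    and n :: nat
  assumes "network V E rho a0 B" and "infinite V" and "n \<ge> 1"
  shows "P_eff_trunc V E rho a0 B (n + 1) \<le> P_eff_trunc V E rho a0 B n"
proof -
  let ?W = "ballV V E a0" and ?Bd = "\<lambda>k. B \<inter> ballV V E a0 k \<union> sphereV V E a0 k"
  interpret \<Gamma>: finite_network "?W n" "restrE (?W n) E" "restrRho (?W n) rho" a0
    by (rule finite_network_ballV[OF assms(1)])
  interpret \<Gamma>': finite_network "?W (n + 1)" "restrE (?W (n + 1)) E" "restrRho (?W (n + 1)) rho" a0
    by (rule finite_network_ballV[OF assms(1)])
  obtain w where w: "dirichlet_sol (?W n) (restrE (?W n) E) (restrRho (?W n) rho) a0 (?Bd n) w"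
    using \<Gamma>.dirichlet_sol_exists[OF a0_notin_trunc_boundary[OF assms(1,3)]] by blast
  then have w_boundary: "\<forall>x\<in>?Bd n. w x = 0" and "w a0 = 1" and w_outside: "\<forall>x. x \<notin> ?W n \<longrightarrow> w x = 0"
    by (simp_all add: \<Gamma>.dirichlet_sol_iff)
  have "\<forall>x\<in>?Bd (n + 1). w x = 0"
    using trunc_boundary_succ_subset[of B V E a0 n] w_boundary w_outside by blast
  then have "P_eff_trunc V E rho a0 B (n + 1) \<le> energy (?W (n + 1)) rho w w / 2"
    using \<Gamma>'.P_eff_le_energy[where g = w, OF a0_notin_trunc_boundary[OF assms(1) le_add2] _ \<open>w a0 = 1\<close>]
    unfolding P_eff_trunc_def energy_restrRho by simp
  also have "\<dots> = energy (?W n) rho w w / 2"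
    using energy_ballV_vanishing_on_sphere[OF assms(1), of n "n + 1" w] w_boundary w_outside by simp
  also have "\<dots> = P_eff_trunc V E rho a0 B n"
    unfolding P_eff_trunc_def \<Gamma>.P_eff_eq_energy[OF w] energy_restrRho ..
  finally show ?thesis .
qed

end
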